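(* Let $m,n,u\in\mathbb{R}$ with $n\neq0$, and let $(G_2,g,J)$ be the three-dimensional Lorentzian Lie group described in the context. Write $\mathbb{V}_{RC}$ for the real vector space of left-invariant Ricci collineations $\xi=\lambda_1\overline{e}_1+\lambda_2\overline{e}_2+\lambda_3\overline{e}_3$ ($\lambda_i\in\mathbb{R}$ constants) associated to the Yano connection. Then $(G_2,g,J)$ admits a nonzero left-invariant Ricci collineation if and only if one of the following holds: (1) $m=0$; in this case $\xi$ is a left-invariant Ricci collineation iff $\lambda_1=0$ and $n\lambda_2=u\lambda_3$, and $\mathbb{V}_{RC}=\langle \frac{u}{n}\overline{e}_2+\overline{e}_3\rangle$; (2) $m\neq0$ and $u=\frac14 m$; in this case $\xi$ is a left-invariant Ricci collineation iff $\lambda_1=0$ and $\lambda_2=-\frac{nu}{n^2+2u^2}\lambda_3$, and $\mathbb{V}_{RC}=\langle -\frac{nu}{n^2+2u^2}\overline{e}_2+\overline{e}_3\rangle$.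
   Context: $G_2$ is a connected three-dimensional Lie group whose Lie algebra has a basis $\{\overline{e}_1,\overline{e}_2,\overline{e}_3\}$ (left-invariant vector fields) with $[\overline{e}_1,\overline{e}_2]=n\overline{e}_2-u\overline{e}_3$, $[\overline{e}_1,\overline{e}_3]=-u\overline{e}_2-n\overline{e}_3$, $[\overline{e}_2,\overline{e}_3]=m\overline{e}_1$, $n\neq0$. The metric $g$ is the left-invariant Lorentzian metric with $g(\overline{e}_1,\overline{e}_1)=g(\overline{e}_2,\overline{e}_2)=1$, $g(\overline{e}_3,\overline{e}_3)=-1$, $g(\overline{e}_i,\overline{e}_j)=0$ for $i\neq j$. $J$ is the left-invariant product structure with $J\overline{e}_1=\overline{e}_1$, $J\overline{e}_2=\overline{e}_2$, $J\overline{e}_3=-\overline{e}_3$. With $\nabla^{LC}$ the Levi-Civita connection of $g$, the Yano connection is $\nabla^{*}_XY=\nabla^{LC}_XY-\frac12(\nabla^{LC}_YJ)JX-\frac14[(\nabla^{LC}_XJ)JY-(\nabla^{LC}_{JX}J)Y]$; its curvature is $R^{*}(X,Y)Z=\nabla^{*}_X\nabla^{*}_YZ-\nabla^{*}_Y\nabla^{*}_XZ-\nabla^{*}_{[X,Y]}Z$; its Ricci tensor is $\mathrm{Ric}^{*}(X,Y)=-g(R^{*}(X,\overline{e}_1)Y,\overline{e}_1)-g(R^{*}(X,\overline{e}_2)Y,\overline{e}_2)+g(R^{*}(X,\overline{e}_3)Y,\overline{e}_3)$; and $\overline{\mathrm{Ric}^{*}}(X,Y)=\frac12(\mathrm{Ric}^{*}(X,Y)+\mathrm{Ric}^{*}(Y,X))$.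 For a left-invariant vector field $\xi$, $(\mathrm{L}_{\xi}\overline{\mathrm{Ric}^{*}})(X,Y)=\xi(\overline{\mathrm{Ric}^{*}}(X,Y))-\overline{\mathrm{Ric}^{*}}([\xi,X],Y)-\overline{\mathrm{Ric}^{*}}(X,[\xi,Y])$; $\xi$ is a left-invariant Ricci collineation if $\mathrm{L}_{\xi}\overline{\mathrm{Ric}^{*}}=0$. *)

theory Defs
  imports "HOL-Analysis.Analysis"
begin

text \<open>Left-invariant vector fields on the Lie group G_2 are identified with their
  constant coefficient vectors in real^3 with respect to the left-invariant frame
  e_1, e_2, e_3 (indices 1, 2, 3 of type 3).\<close>

definition frame :: "3 \<Rightarrow> real^3" where
  "frame k = axis k 1"

definition br_frame :: "real \<Rightarrow> real \<Rightarrow> real \<Rightarrow> 3 \<Rightarrow> 3 \<Rightarrow> real^3" where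
  "br_frame m n u i j =
     (if i = 1 \<and> j = 2 then vector [0, n, -u]
      else if i = 2 \<and> j = 1 then vector [0, -n, u]
      else if i = 1 \<and> j = 3 then vector [0, -u, -n]
      else if i = 3 \<and> j = 1 then vector [0, u, n]
      else if i = 2 \<and> j = 3 then vector [m, 0, 0]
      else if i = 3 \<and> j = 2 then vector [-m, 0, 0]
      else 0)"

definition lie :: "real \<Rightarrow> real \<Rightarrow> real \<Rightarrow> real^3 \<Rightarrow> real^3 \<Rightarrow> real^3" where
  "lie m n u X Y = (\<Sum>i\<in>UNIV. \<Sum>j\<in>UNIV. (X$i * Y$j) *\<^sub>R br_frame m n u i j)"

definition sgn3 :: "3 \<Rightarrow> real" where
  "sgn3 i = (if i = 3 then -1 else 1)"

definition gmet :: "real^3 \<Rightarrow> real^3 \<Rightarrow> real" where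
  "gmet X Y = (\<Sum>i\<in>UNIV. sgn3 i * X$i * Y$i)"

definition Jstr :: "real^3 \<Rightarrow> real^3" where
  "Jstr X = (\<chi> i. sgn3 i * X$i)"

text \<open>Levi-Civita connection on left-invariant fields, given by the Koszul formula
  2 g(nabla_X Y, Z) = g([X,Y],Z) - g([Y,Z],X) + g([Z,X],Y) (metric coefficients constant).\<close>
definition LC :: "real \<Rightarrow> real \<Rightarrow> real \<Rightarrow> real^3 \<Rightarrow> real^3 \<Rightarrow> real^3" where
  "LC m n u X Y = (\<Sum>k\<in>UNIV. (sgn3 k * (1/2) *
      (gmet (lie m n u X Y) (frame k) - gmet (lie m n u Y (frame k)) X
       + gmet (lie m n u (frame k) X) Y)) *\<^sub>R frame k)"

definition nablaJ :: "real \<Rightarrow> real \<Rightarrow> real \<Rightarrow> real^3 \<Rightarrow> real^3 \<Rightarrow> real^3" where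
  "nablaJ m n u X Y = LC m n u X (Jstr Y) - Jstr (LC m n u X Y)"

definition yano :: "real \<Rightarrow> real \<Rightarrow> real \<Rightarrow> real^3 \<Rightarrow> real^3 \<Rightarrow> real^3" where
  "yano m n u X Y = LC m n u X Y - (1/2) *\<^sub>R nablaJ m n u Y (Jstr X)
     - (1/4) *\<^sub>R (nablaJ m n u X (Jstr Y) - nablaJ m n u (Jstr X) Y)"

definition curv :: "real \<Rightarrow> real \<Rightarrow> real \<Rightarrow> real^3 \<Rightarrow> real^3 \<Rightarrow> real^3 \<Rightarrow> real^3" where
  "curv m n u X Y Z = yano m n u X (yano m n u Y Z) - yano m n u Y (yano m n u X Z)
     - yano m n u (lie m n u X Y) Z"

definition ric :: "real \<Rightarrow> real \<Rightarrow> real \<Rightarrow> real^3 \<Rightarrow> real^3 \<Rightarrow> real" where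
  "ric m n u X Y = - gmet (curv m n u X (frame 1) Y) (frame 1)
     - gmet (curv m n u X (frame 2) Y) (frame 2)
     + gmet (curv m n u X (frame 3) Y) (frame 3)"

definition ric_sym :: "real \<Rightarrow> real \<Rightarrow> real \<Rightarrow> real^3 \<Rightarrow> real^3 \<Rightarrow> real" where
  "ric_sym m n u X Y = (1/2) * (ric m n u X Y + ric m n u Y X)"

text \<open>Lie derivative of the symmetrized Ricci tensor along a left-invariant xi, evaluated
  on left-invariant X, Y.  The term xi(Ric(X,Y)) vanishes since Ric(X,Y) is constant.\<close>
definition lie_deriv_ric :: "real \<Rightarrow> real \<Rightarrow> real \<Rightarrow> real^3 \<Rightarrow> real^3 \<Rightarrow> real^3 \<Rightarrow> real" where
  "lie_deriv_ric m n u xi X Y =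
     0 - ric_sym m n u (lie m n u xi X) Y - ric_sym m n u X (lie m n u xi Y)"

definition ricci_collineation :: "real \<Rightarrow> real \<Rightarrow> real \<Rightarrow> real^3 \<Rightarrow> bool" where
  "ricci_collineation m n u xi \<longleftrightarrow> (\<forall>X Y. lie_deriv_ric m n u xi X Y = 0)"

end

theory Submission
  imports Defs
begin

text \<open>Every object involved is left-invariant, so the whole computation takes place in the
  coordinates of the frame: the Yano connection and its curvature are polynomial in the
  coordinates, and the Lie derivative of the symmetrised Ricci tensor along \<open>\<xi>\<close> is a
  symmetric bilinear form whose coefficients are linear in \<open>\<xi>\<close>.  Its vanishing forces
  \<open>\<xi>\<^sub>1 = 0\<close> together with two linear equations in \<open>(\<xi>\<^sub>2, \<xi>\<^sub>3)\<close>.  For \<open>m = 0\<close> the second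
  equation is void; otherwise the determinant of the system is \<open>n (m - 4u) (n\<^sup>2 + u\<^sup>2)\<close>,
  so there is a line of solutions exactly when \<open>u = m/4\<close> and only \<open>\<xi> = 0\<close> otherwise.\<close>

lemma frame_nth: "frame i $ j = (if j = i then 1 else 0)"
  by (simp add: frame_def axis_def)

lemma gmet_eq: "gmet X Y = X$1 * Y$1 + X$2 * Y$2 - X$3 * Y$3"
  by (simp add: gmet_def sum_3 sgn3_def)

lemma Jstr_nth: "Jstr X $ 1 = X$1" "Jstr X $ 2 = X$2" "Jstr X $ 3 = - X$3"
  by (simp_all add: Jstr_def sgn3_def)

lemma lie_nth:
  "lie m n u X Y $ 1 = m * X$2 * Y$3 - m * X$3 * Y$2"
  "lie m n u X Y $ 2 = n * X$1 * Y$2 - u * X$1 * Y$3 - n * X$2 * Y$1 + u * X$3 * Y$1"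
  "lie m n u X Y $ 3 = - u * X$1 * Y$2 - n * X$1 * Y$3 + u * X$2 * Y$1 + n * X$3 * Y$1"
  by (simp_all add: lie_def br_frame_def sum_3 algebra_simps)

lemma LC_nth:
  "LC m n u X Y $ 1 = m/2 * (X$2 * Y$3 - X$3 * Y$2) + n * X$2 * Y$2 + n * X$3 * Y$3"
  "LC m n u X Y $ 2 = - u * X$1 * Y$3 - n * X$2 * Y$1 + m/2 * (X$1 * Y$3 + X$3 * Y$1)"
  "LC m n u X Y $ 3 = - u * X$1 * Y$2 + n * X$3 * Y$1 + m/2 * (X$1 * Y$2 + X$2 * Y$1)"
  by (simp_all add: LC_def sum_3 sgn3_def gmet_eq lie_nth frame_nth algebra_simps)

lemma yano_nth:
  "yano m n u X Y $ 1 = - m * X$3 * Y$2 + n * X$2 * Y$2"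
  "yano m n u X Y $ 2 = - n * X$2 * Y$1 + u * X$3 * Y$1"
  "yano m n u X Y $ 3 = - u * X$1 * Y$2 + u * X$2 * Y$1 - n * X$1 * Y$3"
  by (simp_all add: yano_def nablaJ_def LC_nth Jstr_nth algebra_simps)

lemma ric_sym_eq:
  "ric_sym m n u X Y =
     - (n^2 + u^2) * X$1 * Y$1 - (m * u + n^2) * X$2 * Y$2 - m * n / 2 * (X$2 * Y$3 + X$3 * Y$2)"
  by (simp add: ric_sym_def ric_def curv_def gmet_eq yano_nth lie_nth frame_nth
      algebra_simps power2_eq_square)

lemma lie_deriv_ric_eq:
  "lie_deriv_ric m n u xi X Y =
     - n/2 * ((2 * n^2 + m * u) * xi$2 + n * (m - 2 * u) * xi$3) * (X$1 * Y$2 + X$2 * Y$1)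
     + m/2 * ((n^2 + 2 * u^2) * xi$2 + n * u * xi$3) * (X$1 * Y$3 + X$3 * Y$1)
     + xi$1 * (n * (m * u + 2 * n^2) * X$2 * Y$2 - u * (m * u + n^2) * (X$2 * Y$3 + X$3 * Y$2)
               - m * n * u * X$3 * Y$3)"
  by (simp add: lie_deriv_ric_def ric_sym_eq lie_nth algebra_simps power2_eq_square power3_eq_cube)

lemma ricci_collineation_iff:
  assumes "n \<noteq> 0"
  shows "ricci_collineation m n u xi \<longleftrightarrow>
           xi$1 = 0
         \<and> (2 * n^2 + m * u) * xi$2 + n * (m - 2 * u) * xi$3 = 0
         \<and> m * ((n^2 + 2 * u^2) * xi$2 + n * u * xi$3) = 0"
proof
  assume "ricci_collineation m n u xi"
  then have on_frame: "lie_deriv_ric m n u xi (frame i) (frame j) = 0" for i j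
    by (simp add: ricci_collineation_def)
  have "n * (m * u + 2 * n^2) * xi$1 = 0" "m * n * u * xi$1 = 0"
    using on_frame[of 2 2] on_frame[of 3 3] by (auto simp: lie_deriv_ric_eq frame_nth)
  moreover have "2 * n^3 * xi$1 = n * (m * u + 2 * n^2) * xi$1 - m * n * u * xi$1"
    by (simp add: algebra_simps power2_eq_square power3_eq_cube)
  ultimately have "2 * n^3 * xi$1 = 0"
    by linarith
  then have "xi$1 = 0"
    using assms by simp
  with on_frame[of 1 2] on_frame[of 1 3] assms show "xi$1 = 0
         \<and> (2 * n^2 + m * u) * xi$2 + n * (m - 2 * u) * xi$3 = 0
         \<and> m * ((n^2 + 2 * u^2) * xi$2 + n * u * xi$3) = 0"
    by (simp add: lie_deriv_ric_eq frame_nth)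
qed (simp add: ricci_collineation_def lie_deriv_ric_eq)

lemma ricci_collineation_m0_iff:
  assumes "n \<noteq> 0"
  shows "ricci_collineation 0 n u xi \<longleftrightarrow> xi$1 = 0 \<and> n * xi$2 = u * xi$3"
proof -
  have "2 * n^2 * xi$2 + n * (- 2 * u) * xi$3 = 2 * n * (n * xi$2 - u * xi$3)"
    by (simp add: algebra_simps power2_eq_square)
  then show ?thesis
    using assms by (simp add: ricci_collineation_iff)
qed

text \<open>For \<open>m = 4u\<close> the second equation of \<open>ricci_collineation_iff\<close> is twice
  the linear form inside the third.\<close>

lemma ricci_collineation_quarter_iff:
  assumes "n \<noteq> 0" and "u = m / 4"
  shows "ricci_collineation m n u xi \<longleftrightarrow>
           xi$1 = 0 \<and> xi$2 = - (n * u / (n^2 + 2 * u^2)) * xi$3"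
proof -
  have pos: "n^2 + 2 * u^2 > 0"
    using assms(1) by (simp add: add_pos_nonneg)
  have "(2 * n^2 + m * u) * xi$2 + n * (m - 2 * u) * xi$3
          = 2 * ((n^2 + 2 * u^2) * xi$2 + n * u * xi$3)"
    unfolding \<open>u = m / 4\<close> by (simp add: algebra_simps power2_eq_square)
  moreover have "(n^2 + 2 * u^2) * xi$2 + n * u * xi$3 = 0 \<longleftrightarrow>
                   xi$2 = - (n * u / (n^2 + 2 * u^2)) * xi$3"
    using pos by (auto simp: field_simps)
  ultimately show ?thesis
    using assms(1) by (auto simp: ricci_collineation_iff)
qed

lemma ricci_collineation_eq_0:
  assumes "n \<noteq> 0" and "m \<noteq> 0" and "u \<noteq> m / 4"
    and "ricci_collineation m n u xi"
  shows "xi = 0"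
proof -
  have xi1: "xi$1 = 0"
    and eq1: "(2 * n^2 + m * u) * xi$2 + n * (m - 2 * u) * xi$3 = 0"
    and eq2: "(n^2 + 2 * u^2) * xi$2 + n * u * xi$3 = 0"
    using assms by (simp_all add: ricci_collineation_iff)
  have elimination:
    "(n^2 + 2 * u^2) * ((2 * n^2 + m * u) * xi$2 + n * (m - 2 * u) * xi$3)
       - (2 * n^2 + m * u) * ((n^2 + 2 * u^2) * xi$2 + n * u * xi$3)
     = n * (m - 4 * u) * (n^2 + u^2) * xi$3"
    by (simp add: algebra_simps power2_eq_square power3_eq_cube)
  have "n^2 + u^2 > 0"
    using assms(1) by (simp add: add_pos_nonneg)
  moreover have "m - 4 * u \<noteq> 0"
    using assms(3) by simp
  ultimately have xi3: "xi$3 = 0"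
    using elimination eq1 eq2 assms(1) by simp
  have "n^2 + 2 * u^2 > 0"
    using assms(1) by (simp add: add_pos_nonneg)
  then have "xi$2 = 0"
    using eq2 xi3 by simp
  with xi1 xi3 show ?thesis
    by (simp add: vec_eq_iff forall_3)
qed

lemma line_eq_span_frame:
  "{xi :: real^3. xi$1 = 0 \<and> xi$2 = k * xi$3} = span {k *\<^sub>R frame 2 + frame 3}"
proof -
  have "xi$1 = 0 \<and> xi$2 = k * xi$3 \<longleftrightarrow> (\<exists>t. xi = t *\<^sub>R (k *\<^sub>R frame 2 + frame 3))"
    for xi :: "real^3"
    by (auto simp: vec_eq_iff forall_3 frame_nth)
  then show ?thesis
    by (auto simp: span_singleton)
qed

lemma frame_line_generator_nonzero: "k *\<^sub>R frame 2 + frame 3 \<noteq> (0 :: real^3)"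
  by (simp add: vec_eq_iff forall_3 frame_nth)

lemma ricci_collineations_m0_eq_span:
  assumes "n \<noteq> 0"
  shows "{xi. ricci_collineation 0 n u xi} = span {(u / n) *\<^sub>R frame 2 + frame 3}"
proof -
  have "{xi. ricci_collineation 0 n u xi} = {xi. xi$1 = 0 \<and> xi$2 = (u / n) * xi$3}"
    using assms by (auto simp: ricci_collineation_m0_iff field_simps)
  then show ?thesis
    by (simp only: line_eq_span_frame)
qed

lemma ricci_collineations_quarter_eq_span:
  assumes "n \<noteq> 0" and "u = m / 4"
  shows "{xi. ricci_collineation m n u xi} =
           span {(- (n * u / (n^2 + 2 * u^2))) *\<^sub>R frame 2 + frame 3}"
proof -
  have "{xi. ricci_collineation m n u xi} =
          {xi. xi$1 = 0 \<and> xi$2 = - (n * u / (n^2 + 2 * u^2)) * xi$3}"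
    using ricci_collineation_quarter_iff[OF assms] by blast
  then show ?thesis
    by (simp only: line_eq_span_frame)
qed

theorem theorem3p6:
  fixes m n u :: real
  assumes "n \<noteq> 0"
  shows "((\<exists>xi. xi \<noteq> 0 \<and> ricci_collineation m n u xi) \<longleftrightarrow>
            (m = 0 \<or> (m \<noteq> 0 \<and> u = m / 4)))
     \<and> (m = 0 \<longrightarrow>
          (\<forall>xi. ricci_collineation m n u xi \<longleftrightarrow> xi$1 = 0 \<and> n * xi$2 = u * xi$3)
          \<and> {xi. ricci_collineation m n u xi} = span {(u / n) *\<^sub>R frame 2 + frame 3})
     \<and> (m \<noteq> 0 \<and> u = m / 4 \<longrightarrow>
          (\<forall>xi. ricci_collineation m n u xi \<longleftrightarrow>
                 xi$1 = 0 \<and> xi$2 = - (n * u / (n^2 + 2 * u^2)) * xi$3)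
          \<and> {xi. ricci_collineation m n u xi} =
               span {(- (n * u / (n^2 + 2 * u^2))) *\<^sub>R frame 2 + frame 3})"
proof -
  have m0_span: "{xi. ricci_collineation m n u xi} = span {(u / n) *\<^sub>R frame 2 + frame 3}"
    if "m = 0"
    using ricci_collineations_m0_eq_span[OF assms] that by simp
  note quarter_span = ricci_collineations_quarter_eq_span[OF assms]
  have "\<exists>xi. xi \<noteq> 0 \<and> ricci_collineation m n u xi" if "m = 0 \<or> u = m / 4"
    using that m0_span quarter_span frame_line_generator_nonzero span_base
    by (metis insertI1 mem_Collect_eq)
  then show ?thesis
    using ricci_collineation_eq_0[OF assms] ricci_collineation_m0_iff[OF assms]
      ricci_collineation_quarter_iff[OF assms] m0_span quarter_span
    by blast
qed

end
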